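(* Let $D$ be a database, $R$ a regular expression and $\mathcal{A}$ any automaton with $L(R)=L(\mathcal{A})$. Let $s,t$ be vertices of $D$ and let $P$ be the set of walks of $\llbracket\mathcal{A}\rrbracket_W(D)$ going from $s$ to $t$. If $w\in P$ has minimal length in $P$, then $w\in\llbracket R\rrbracket_{BT}(D)$.
   Context: A database is $D=(\Sigma,V,E,\mathrm{src},\mathrm{tgt},\mathrm{lbl})$ with finite alphabet $\Sigma$, finite vertex set $V$, finite edge set $E$, $\mathrm{src},\mathrm{tgt}:E\to V$, $\mathrm{lbl}:E\to2^\Sigma$; a walk is $(n_0,e_0,\dots,e_{k-1},n_k)$ with $\mathrm{src}(e_i)=n_i$, $\mathrm{tgt}(e_i)=n_{i+1}$, of length $k$, with $\mathrm{lbl}(w)=\{u_0\cdots u_{k-1}:u_i\in\mathrm{lbl}(e_i)\}$. For an automaton $\mathcal{A}$, the walk semantics $\llbracket\mathcal{A}\rrbracket_W(D)$ consists of the walks $w$ of $D$ with $\mathrm{lbl}(w)\cap L(\mathcal{A})\ne\emptyset$ (as projections of runs of the product $D\times\mathcal{A}$). Regular expressions: $R::=\varepsilon\mid a\mid R^*\mid R\cdot R\mid R+R$. A linearisation $R'$ of $R$ replaces each atom occurrence by a distinct fresh symbol (position) of an alphabet $\Gamma$; $\overline\alpha\in\Sigma$ denotes the original letter of position $\alpha$. A binding trail of $D$ matching $R$ is a sequence $(e_1,\alpha_1)\cdots(e_n,\alpha_n)\in(E\times\Gamma)^*$ with $e_1\cdots e_n$ a walk of $D$, $\overline{\alpha_1\cdots\alpha_n}\in\mathrm{lbl}(e_1\cdots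 e_n)$, $\alpha_1\cdots\alpha_n\in L(R')$, and the pairs $(e_i,\alpha_i)$ pairwise distinct. $\llbracket R\rrbracket_{BT}(D)$ is the bag of the walks $e_1\cdots e_n$ underlying binding trails of $D$ matching $R$. *)

theory Defs
  imports Main
begin

record ('a, 'v, 'e) db =
  alph  :: "'a set"
  verts :: "'v set"
  edges :: "'e set"
  src   :: "'e \<Rightarrow> 'v"
  tgt   :: "'e \<Rightarrow> 'v"
  lbl   :: "'e \<Rightarrow> 'a set"

definition wf_db :: "('a, 'v, 'e) db \<Rightarrow> bool" where
  "wf_db D \<longleftrightarrow> finite (alph D) \<and> finite (verts D) \<and> finite (edges D) \<and>
     (\<forall>e\<in>edges D. src D e \<in> verts D \<and> tgt D e \<in> verts D \<and> lbl D e \<subseteq> alph D)"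

text \<open>A walk (n0, e0, ..., e_{k-1}, n_k) is represented by its start vertex n0 and its
  edge list [e0, ..., e_{k-1}]; the intermediate vertices are determined by src/tgt.\<close>
type_synonym ('v, 'e) walk = "'v \<times> 'e list"

fun chain :: "('a, 'v, 'e) db \<Rightarrow> 'v \<Rightarrow> 'e list \<Rightarrow> bool" where
  "chain D n [] = True"
| "chain D n (e # es) = (src D e = n \<and> chain D (tgt D e) es)"

definition is_walk :: "('a, 'v, 'e) db \<Rightarrow> ('v, 'e) walk \<Rightarrow> bool" where
  "is_walk D w \<longleftrightarrow> fst w \<in> verts D \<and> set (snd w) \<subseteq> edges D \<and> chain D (fst w) (snd w)"

definition walk_src :: "('v, 'e) walk \<Rightarrow> 'v" where
  "walk_src w = fst w"

definition walk_tgt :: "('a, 'v, 'e) db \<Rightarrow> ('v, 'e) walk \<Rightarrow> 'v" where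
  "walk_tgt D w = (if snd w = [] then fst w else tgt D (last (snd w)))"

definition walk_len :: "('v, 'e) walk \<Rightarrow> nat" where
  "walk_len w = length (snd w)"

definition lbl_edges :: "('a, 'v, 'e) db \<Rightarrow> 'e list \<Rightarrow> 'a list set" where
  "lbl_edges D es = {us. list_all2 (\<lambda>u e. u \<in> lbl D e) us es}"

definition lbl_walk :: "('a, 'v, 'e) db \<Rightarrow> ('v, 'e) walk \<Rightarrow> 'a list set" where
  "lbl_walk D w = lbl_edges D (snd w)"

record ('q, 'a) nfa =
  states :: "'q set"
  init   :: "'q set"
  final  :: "'q set"
  trans  :: "('q \<times> 'a \<times> 'q) set"

definition wf_nfa :: "('q, 'a) nfa \<Rightarrow> bool" where
  "wf_nfa A \<longleftrightarrow> finite (states A) \<and> init A \<subseteq> states A \<and> final A \<subseteq> states A \<and>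
     finite (trans A) \<and> trans A \<subseteq> states A \<times> UNIV \<times> states A"

definition accepts :: "('q, 'a) nfa \<Rightarrow> 'a list \<Rightarrow> bool" where
  "accepts A u \<longleftrightarrow> (\<exists>qs. length qs = Suc (length u) \<and> hd qs \<in> init A \<and> last qs \<in> final A \<and>
     (\<forall>i<length u. (qs ! i, u ! i, qs ! Suc i) \<in> trans A))"

definition nfa_lang :: "('q, 'a) nfa \<Rightarrow> 'a list set" where
  "nfa_lang A = {u. accepts A u}"

definition walk_sem :: "('q, 'a) nfa \<Rightarrow> ('a, 'v, 'e) db \<Rightarrow> ('v, 'e) walk set" where
  "walk_sem A D = {w. is_walk D w \<and> lbl_walk D w \<inter> nfa_lang A \<noteq> {}}"

datatype 'a rexp = Eps | Atom 'a | Star "'a rexp" | Conc "'a rexp" "'a rexp" | Plus "'a rexp" "'a rexp"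

fun lang :: "'a rexp \<Rightarrow> 'a list set" where
  "lang Eps = {[]}"
| "lang (Atom a) = {[a]}"
| "lang (Star r) = {concat us | us. \<forall>u\<in>set us. u \<in> lang r}"
| "lang (Conc r s) = {u @ v | u v. u \<in> lang r \<and> v \<in> lang s}"
| "lang (Plus r s) = lang r \<union> lang s"

fun natoms :: "'a rexp \<Rightarrow> nat" where
  "natoms Eps = 0"
| "natoms (Atom a) = 1"
| "natoms (Star r) = natoms r"
| "natoms (Conc r s) = natoms r + natoms s"
| "natoms (Plus r s) = natoms r + natoms s"

text \<open>Linearisation: the atom occurrences are numbered left to right starting at n; the
  position alphabet is nat \<times> 'a, a position (i, a) being the i-th atom occurrence, whose
  original letter is a = snd (i, a). Distinct occurrences get distinct positions.\<close>
fun lin :: "nat \<Rightarrow> 'a rexp \<Rightarrow> (nat \<times> 'a) rexp" where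
  "lin n Eps = Eps"
| "lin n (Atom a) = Atom (n, a)"
| "lin n (Star r) = Star (lin n r)"
| "lin n (Conc r s) = Conc (lin n r) (lin (n + natoms r) s)"
| "lin n (Plus r s) = Plus (lin n r) (lin (n + natoms r) s)"

definition linearise :: "'a rexp \<Rightarrow> (nat \<times> 'a) rexp" where
  "linearise R = lin 0 R"

text \<open>A binding trail, given with the start vertex of its underlying walk.\<close>
definition binding_trail ::
  "('a, 'v, 'e) db \<Rightarrow> 'a rexp \<Rightarrow> 'v \<Rightarrow> ('e \<times> (nat \<times> 'a)) list \<Rightarrow> bool" where
  "binding_trail D R n bt \<longleftrightarrow>
     is_walk D (n, map fst bt) \<and>
     map snd (map snd bt) \<in> lbl_edges D (map fst bt) \<and>
     map snd bt \<in> lang (linearise R) \<and>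
     distinct bt"

text \<open>Support of the bag [[R]]_BT(D): walks underlying some binding trail matching R.\<close>
definition bt_sem :: "'a rexp \<Rightarrow> ('a, 'v, 'e) db \<Rightarrow> ('v, 'e) walk set" where
  "bt_sem R D = {(n, map fst bt) | n bt. binding_trail D R n bt}"

end

theory Submission
  imports Defs
begin

text \<open>Zip the edges of a shortest walk from s to t in the walk semantics with a linearisation of
  one of its accepted labels. If some pair (e, \<alpha>) occurs twice, the walk between the two
  occurrences is closed and can be cut out. The position word stays in L(R') because a linear
  expression has the exchange property: from x \<alpha> y \<in> L(R') and x' \<alpha> y' \<in> L(R') follows
  x \<alpha> y' \<in> L(R'), as the position \<alpha> fixes the atom occurrence being read. Projecting back
  gives a shorter walk from s to t with a label in L(R) = L(A), contradicting minimality.\<close>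

text \<open>r is linear (no letter occurs twice in r) iff distinct (atoms r).\<close>

fun atoms :: "'a rexp \<Rightarrow> 'a list" where
  "atoms Eps = []"
| "atoms (Atom a) = [a]"
| "atoms (Star r) = atoms r"
| "atoms (Conc r s) = atoms r @ atoms s"
| "atoms (Plus r s) = atoms r @ atoms s"

lemma lang_subset_atoms: "u \<in> lang r \<Longrightarrow> set u \<subseteq> set (atoms r)"
  by (induction r arbitrary: u) fastforce+

lemma map_fst_atoms_lin: "map fst (atoms (lin n R)) = [n..<n + natoms R]"
proof (induction R arbitrary: n)
  case (Conc r s)
  then show ?case
    using upt_add_eq_append[of n "n + natoms r" "natoms s"] by (simp add: add.assoc)
next
  case (Plus r s)
  then show ?case
    using upt_add_eq_append[of n "n + natoms r" "natoms s"] by (simp add: add.assoc)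
qed simp_all

lemma distinct_atoms_lin: "distinct (atoms (lin n R))"
  using distinct_map[of fst "atoms (lin n R)"] by (simp add: map_fst_atoms_lin)

lemma lang_Star: "lang (Star r) = concat ` lists (lang r)"
  by auto

lemma map_image_append_set:
  "map f ` {u @ v | u v. u \<in> A \<and> v \<in> B} = {u @ v | u v. u \<in> map f ` A \<and> v \<in> map f ` B}"
  by (auto simp: image_iff) (metis map_append)+

lemma map_snd_lang_lin: "map snd ` lang (lin n R) = lang R"
proof (induction R arbitrary: n)
  case (Star r)
  have "map snd ` lang (lin n (Star r)) = concat ` map (map snd) ` lists (lang (lin n r))"
    unfolding lin.simps lang_Star by (simp add: image_image map_concat)
  also have "\<dots> = lang (Star r)"
    unfolding lang_Star by (simp add: Star.IH flip: lists_image)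
  finally show ?case .
next
  case (Conc r s)
  show ?case
    by (simp add: map_image_append_set Conc.IH)
qed (auto simp: image_Un)

lemma concat_eq_append_ConsE:
  assumes "concat xss = ys @ c # zs"
  obtains xss1 xs xs' xss2 where "xss = xss1 @ (xs @ c # xs') # xss2"
    and "ys = concat xss1 @ xs" and "zs = xs' @ concat xss2"
  using assms
proof (induction xss arbitrary: ys thesis)
  case (Cons xs xss)
  from Cons.prems(2) consider (here) xs' where "xs = ys @ c # xs'" "zs = xs' @ concat xss"
    | (later) us where "ys = xs @ us" "concat xss = us @ c # zs"
    by (auto simp: append_eq_append_conv2 append_eq_Cons_conv)
  then show ?case
  proof cases
    case here
    then show ?thesis by (intro Cons.prems(1)[of "[]"]) auto
  next
    case later
    obtain xss1 xs1 xs' xss2 where "xss = xss1 @ (xs1 @ c # xs') # xss2"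
      and "us = concat xss1 @ xs1" and "zs = xs' @ concat xss2"
      using Cons.IH[OF _ later(2)] by blast
    with later show ?thesis by (intro Cons.prems(1)[of "xs # xss1"]) auto
  qed
qed simp

lemma append_in_lang_Conc: "u \<in> lang r \<Longrightarrow> v \<in> lang s \<Longrightarrow> u @ v \<in> lang (Conc r s)"
  by auto

lemma append_in_lang_Star:
  assumes "u \<in> lang (Star r)" "v \<in> lang (Star r)"
  shows "u @ v \<in> lang (Star r)"
proof -
  from assms obtain us vs where "us \<in> lists (lang r)" "vs \<in> lists (lang r)"
    and "u = concat us" "v = concat vs"
    unfolding lang_Star by blast
  then have "us @ vs \<in> lists (lang r)" "u @ v = concat (us @ vs)"
    by simp_all
  then show ?thesis
    unfolding lang_Star by blast
qed

lemma in_lang_StarI: "u \<in> lang r \<Longrightarrow> u \<in> lang (Star r)"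
  unfolding lang_Star using imageI[of "[u]" "lists (lang r)" concat] by simp

lemma append_Cons_in_lang_ConcE:
  assumes "x @ c # y \<in> lang (Conc r s)"
  obtains (left) y1 v where "x @ c # y1 \<in> lang r" "v \<in> lang s" "y = y1 @ v"
    | (right) u x2 where "u \<in> lang r" "x2 @ c # y \<in> lang s" "x = u @ x2"
proof -
  from assms obtain u v where uv: "x @ c # y = u @ v" "u \<in> lang r" "v \<in> lang s"
    by auto
  then consider y1 where "u = x @ c # y1" "y = y1 @ v" | x2 where "x = u @ x2" "v = x2 @ c # y"
    by (auto simp: append_eq_append_conv2 Cons_eq_append_conv)
  then show thesis
    using left right uv(2,3) by cases auto
qed

lemma append_Cons_in_lang_StarE:
  assumes "x @ c # y \<in> lang (Star r)"
  obtains u p q v where "x = u @ p" "y = q @ v" "u \<in> lang (Star r)" "p @ c # q \<in> lang r"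
    "v \<in> lang (Star r)"
proof -
  from assms obtain us where concat_us: "concat us = x @ c # y" and us: "set us \<subseteq> lang r"
    by (fastforce simp: subset_iff)
  from concat_us obtain us1 p q us2 where "us = us1 @ (p @ c # q) # us2"
    and "x = concat us1 @ p" and "y = q @ concat us2"
    by (rule concat_eq_append_ConsE)
  with us show thesis
    by (intro that[of "concat us1" p q "concat us2"]) (auto simp: lang_Star)
qed

text \<open>In a linear expression a letter c determines the subexpression that reads it, so two
  words containing c decompose alike.\<close>

lemma lang_Plus_same_summand:
  assumes "distinct (atoms (Plus r s))"
    and "x @ c # y \<in> lang (Plus r s)" "x' @ c # y' \<in> lang (Plus r s)"
  shows "x @ c # y \<in> lang r \<and> x' @ c # y' \<in> lang r \<or> x @ c # y \<in> lang s \<and> x' @ c # y' \<in> lang s"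
proof -
  have "c \<in> set (atoms r)" if "z @ c # z' \<in> lang r" for z z'
    using lang_subset_atoms[OF that] by simp
  moreover have "c \<in> set (atoms s)" if "z @ c # z' \<in> lang s" for z z'
    using lang_subset_atoms[OF that] by simp
  moreover have "c \<notin> set (atoms r) \<or> c \<notin> set (atoms s)"
    using assms(1) by auto
  ultimately show ?thesis
    using assms(2,3) by auto
qed

lemma lang_Conc_same_splitE:
  assumes "distinct (atoms (Conc r s))"
    and "x @ c # y \<in> lang (Conc r s)" "x' @ c # y' \<in> lang (Conc r s)"
  obtains (left) y1 y1' v' where "x @ c # y1 \<in> lang r" "x' @ c # y1' \<in> lang r"
      "v' \<in> lang s" "y' = y1' @ v'"
    | (right) u x2 x2' where "u \<in> lang r" "x = u @ x2" "x2 @ c # y \<in> lang s"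
      "x2' @ c # y' \<in> lang s"
proof -
  have in_r: "c \<in> set (atoms r)" if "z @ c # z' \<in> lang r" for z z'
    using lang_subset_atoms[OF that] by simp
  have in_s: "c \<in> set (atoms s)" if "z @ c # z' \<in> lang s" for z z'
    using lang_subset_atoms[OF that] by simp
  have disjoint: "c \<notin> set (atoms r) \<or> c \<notin> set (atoms s)"
    using assms(1) by auto
  from assms(2) show thesis
  proof (cases rule: append_Cons_in_lang_ConcE)
    case l: left
    from assms(3) show thesis
    proof (cases rule: append_Cons_in_lang_ConcE)
      case left
      with l show thesis by (intro that(1)) auto
    next
      case right
      with l show thesis using disjoint in_r in_s by blast
    qed
  next
    case r: right
    from assms(3) show thesis
    proof (cases rule: append_Cons_in_lang_ConcE)
      case left
      with r show thesis using disjoint in_r in_s by blast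
    next
      case right
      with r show thesis by (intro that(2)) auto
    qed
  qed
qed

lemma lang_exchange:
  assumes "distinct (atoms r)" "x @ c # y \<in> lang r" "x' @ c # y' \<in> lang r"
  shows "x @ c # y' \<in> lang r"
  using assms
proof (induction r arbitrary: x y x' y')
  case (Atom a)
  then show ?case by (auto simp: append_eq_Cons_conv)
next
  case (Plus r s)
  show ?case
    using lang_Plus_same_summand[OF Plus.prems] Plus.prems(1)
      Plus.IH(1)[of x y x' y'] Plus.IH(2)[of x y x' y'] by auto
next
  case (Conc r s)
  have distinct: "distinct (atoms r)" "distinct (atoms s)"
    using Conc.prems(1) by simp_all
  from Conc.prems show ?case
  proof (cases rule: lang_Conc_same_splitE)
    case (left y1 y1' v')
    from distinct(1) left(1,2) have "x @ c # y1' \<in> lang r"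
      by (rule Conc.IH(1))
    then have "(x @ c # y1') @ v' \<in> lang (Conc r s)"
      using left(3) by (rule append_in_lang_Conc)
    then show ?thesis
      by (simp add: left(4))
  next
    case (right u x2 x2')
    from distinct(2) right(3,4) have "x2 @ c # y' \<in> lang s"
      by (rule Conc.IH(2))
    with right(1) have "u @ x2 @ c # y' \<in> lang (Conc r s)"
      by (rule append_in_lang_Conc)
    then show ?thesis
      by (simp add: right(2))
  qed
next
  case (Star r)
  from Star.prems(2) obtain u p q v where x: "x = u @ p"
    and u: "u \<in> lang (Star r)" and pq: "p @ c # q \<in> lang r"
    by (rule append_Cons_in_lang_StarE)
  from Star.prems(3) obtain u' p' q' v' where y': "y' = q' @ v'"
    and p'q': "p' @ c # q' \<in> lang r" and v': "v' \<in> lang (Star r)"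
    by (rule append_Cons_in_lang_StarE)
  have "distinct (atoms r)"
    using Star.prems(1) by simp
  from this pq p'q' have "p @ c # q' \<in> lang r"
    by (rule Star.IH)
  from this v' have "(p @ c # q') @ v' \<in> lang (Star r)"
    by (rule append_in_lang_Star[OF in_lang_StarI])
  with u have "u @ (p @ c # q') @ v' \<in> lang (Star r)"
    by (rule append_in_lang_Star)
  then show ?case
    by (simp add: x y')
qed simp

lemma lang_cut_loop:
  assumes "distinct (atoms r)" "x @ c # y @ c # z \<in> lang r"
  shows "x @ c # z \<in> lang r"
  using lang_exchange[OF assms(1,2), of "x @ c # y" z] assms(2) by simp

lemma chain_append:
  "chain D n (xs @ ys) \<longleftrightarrow> chain D n xs \<and> chain D (walk_tgt D (n, xs)) ys"
  by (induction xs arbitrary: n) (auto simp: walk_tgt_def)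

lemma is_walk_cut_loop:
  assumes "is_walk D (n, xs @ e # ys @ e # zs)"
  shows "is_walk D (n, xs @ e # zs)"
proof -
  have "chain D n (xs @ [e] @ ys @ [e] @ zs)"
    using assms by (simp add: is_walk_def)
  then have "chain D n (xs @ [e]) \<and> chain D (tgt D e) zs"
    by (simp only: chain_append) (simp add: walk_tgt_def)
  then have "chain D n ((xs @ [e]) @ zs)"
    by (simp only: chain_append) (simp add: walk_tgt_def)
  then show ?thesis
    using assms by (auto simp: is_walk_def)
qed

lemma walk_tgt_cut_loop: "walk_tgt D (n, xs @ e # ys @ e # zs) = walk_tgt D (n, xs @ e # zs)"
  by (cases zs rule: rev_cases) (simp_all add: walk_tgt_def)

lemma map_snd_in_lbl_edges_iff:
  "map snd (map snd bt) \<in> lbl_edges D (map fst bt) \<longleftrightarrow> (\<forall>x \<in> set bt. snd (snd x) \<in> lbl D (fst x))"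
  unfolding lbl_edges_def by (induction bt) auto

definition binding_walk ::
  "('a, 'v, 'e) db \<Rightarrow> 'a rexp \<Rightarrow> 'v \<Rightarrow> ('e \<times> (nat \<times> 'a)) list \<Rightarrow> bool" where
  "binding_walk D R n bt \<longleftrightarrow>
     is_walk D (n, map fst bt) \<and>
     map snd (map snd bt) \<in> lbl_edges D (map fst bt) \<and>
     map snd bt \<in> lang (linearise R)"

lemma binding_trail_iff: "binding_trail D R n bt \<longleftrightarrow> binding_walk D R n bt \<and> distinct bt"
  by (auto simp: binding_trail_def binding_walk_def)

lemma binding_walk_cut_loop:
  assumes "binding_walk D R n (xs @ p # ys @ p # zs)"
  shows "binding_walk D R n (xs @ p # zs)"
proof -
  have walk: "is_walk D (n, map fst xs @ fst p # map fst ys @ fst p # map fst zs)"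
    and labels: "\<forall>x \<in> set (xs @ p # ys @ p # zs). snd (snd x) \<in> lbl D (fst x)"
    and word: "map snd xs @ snd p # map snd ys @ snd p # map snd zs \<in> lang (lin 0 R)"
    using assms unfolding binding_walk_def map_snd_in_lbl_edges_iff linearise_def by simp_all
  have "is_walk D (n, map fst (xs @ p # zs))"
    using is_walk_cut_loop[OF walk] by simp
  moreover have "map snd (map snd (xs @ p # zs)) \<in> lbl_edges D (map fst (xs @ p # zs))"
    unfolding map_snd_in_lbl_edges_iff using labels by auto
  moreover have "map snd (xs @ p # zs) \<in> lang (linearise R)"
    using lang_cut_loop[OF distinct_atoms_lin word] by (simp add: linearise_def)
  ultimately show ?thesis
    unfolding binding_walk_def by blast
qed

lemma walk_sem_iff_binding_walk:
  assumes "lang R = nfa_lang A"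
  shows "(n, es) \<in> walk_sem A D \<longleftrightarrow> (\<exists>bt. binding_walk D R n bt \<and> map fst bt = es)"
proof
  assume "(n, es) \<in> walk_sem A D"
  then obtain u where walk: "is_walk D (n, es)" and u: "u \<in> lbl_edges D es" "u \<in> nfa_lang A"
    unfolding walk_sem_def lbl_walk_def by auto
  then have "u \<in> map snd ` lang (linearise R)"
    using assms by (simp add: linearise_def map_snd_lang_lin)
  then obtain \<alpha> where \<alpha>: "\<alpha> \<in> lang (linearise R)" and u_eq: "u = map snd \<alpha>"
    by blast
  have "length es = length \<alpha>"
    using u(1) u_eq by (auto simp: lbl_edges_def dest: list_all2_lengthD)
  then have "map fst (zip es \<alpha>) = es" "map snd (zip es \<alpha>) = \<alpha>"
    by simp_all
  with walk u(1) u_eq \<alpha> have "binding_walk D R n (zip es \<alpha>)"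
    by (simp add: binding_walk_def)
  with \<open>map fst (zip es \<alpha>) = es\<close> show "\<exists>bt. binding_walk D R n bt \<and> map fst bt = es"
    by blast
next
  assume "\<exists>bt. binding_walk D R n bt \<and> map fst bt = es"
  then obtain bt where bt: "binding_walk D R n bt" and es: "es = map fst bt"
    by auto
  have "map snd (map snd bt) \<in> map snd ` lang (linearise R)"
    using bt unfolding binding_walk_def by blast
  then have "map snd (map snd bt) \<in> nfa_lang A"
    using assms by (simp add: linearise_def map_snd_lang_lin)
  with bt show "(n, es) \<in> walk_sem A D"
    unfolding es walk_sem_def lbl_walk_def binding_walk_def by auto
qed

theorem proposition29:
  fixes D :: "('a, 'v, 'e) db" and R :: "'a rexp" and A :: "('q, 'a) nfa"
    and s t :: 'v and w :: "('v, 'e) walk"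
  assumes "wf_db D" and "wf_nfa A" and "lang R = nfa_lang A"
    and "s \<in> verts D" and "t \<in> verts D"
    and "P = {w' \<in> walk_sem A D. walk_src w' = s \<and> walk_tgt D w' = t}"
    and "w \<in> P" and "\<forall>w'\<in>P. walk_len w \<le> walk_len w'"
  shows "w \<in> bt_sem R D"
proof -
  note walk_sem = walk_sem_iff_binding_walk[OF assms(3)]
  from assms(6,7) have "w \<in> walk_sem A D" "fst w = s"
    by (simp_all add: walk_src_def)
  then obtain bt where bt: "binding_walk D R s bt" "w = (s, map fst bt)"
    using walk_sem[of "fst w" "snd w"] by auto
  have "distinct bt"
  proof (rule ccontr)
    assume "\<not> distinct bt"
    then obtain xs p ys zs where loop: "bt = xs @ p # ys @ p # zs"
      using not_distinct_decomp by fastforce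
    let ?w' = "(s, map fst (xs @ p # zs))"
    have "?w' \<in> P"
      using bt assms(6,7) loop binding_walk_cut_loop[of D R s xs p ys zs]
        walk_tgt_cut_loop[of D s "map fst xs" "fst p" "map fst ys" "map fst zs"]
      by (auto simp: walk_sem walk_src_def)
    moreover have "walk_len ?w' < walk_len w"
      using bt(2) loop by (simp add: walk_len_def)
    ultimately show False
      using assms(8) by fastforce
  qed
  with bt show ?thesis
    by (auto simp: bt_sem_def binding_trail_iff)
qed

end
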